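(* Fix an integer $t\ge1$ and $\delta\in[0,1)$. For every finite binary input sequence $x$ and all binary sequences $y^1,\dots,y^t$, $$\Pr(Y^1=y^1,\dots,Y^t=y^t\mid X=x)=\Pr(\tilde Y^1=y^1,\dots,\tilde Y^t=y^t\mid X=x),$$ where $(Y^1,\dots,Y^t)$ are the outputs of the $t$-trace deletion channel on input $X$, and $(\tilde Y^1,\dots,\tilde Y^t)$ are the outputs of the cascade in which $X$ is first passed through a deletion channel with deletion probability $\delta^t$, producing $Z$, and then $Z$ is passed through the remnant channel with parameter $\delta$ (with $t$ outputs).
   Context: A deletion channel with deletion probability $q$ deletes each input symbol independently with probability $q$ and outputs the subsequence of undeleted symbols. The $t$-trace deletion channel passes the same input $X$ through $t$ independent deletion channels each with deletion probability $\delta$, giving outputs $Y^1,\dots,Y^t$. The remnant channel with parameter $\delta$ and $t$ outputs acts independently on each input symbol: for each nonempty subset $S\subseteq\{1,\dots,t\}$, with probability $\frac{\delta^{t-|S|}(1-\delta)^{|S|}}{1-\delta^t}$ the symbol is kept (in order) in exactly the outputs indexed by $S$ and deleted from the others; its outputs are $\tilde Y^1,\dots,\tilde Y^t$. In the cascade, the remnant channel acts independently of the first deletion channel given its input. *)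

theory Defs
  imports "HOL-Probability.Probability"
begin

fun del_chan :: "real \<Rightarrow> 'a list \<Rightarrow> 'a list pmf" where
  "del_chan q [] = return_pmf []"
| "del_chan q (x # xs) =
     bind_pmf (bernoulli_pmf (1 - q)) (\<lambda>keep.
     bind_pmf (del_chan q xs) (\<lambda>ys.
     return_pmf (if keep then x # ys else ys)))"

fun trace_chan :: "real \<Rightarrow> nat \<Rightarrow> 'a list \<Rightarrow> 'a list list pmf" where
  "trace_chan d 0 x = return_pmf []"
| "trace_chan d (Suc t) x =
     bind_pmf (del_chan d x) (\<lambda>y.
     bind_pmf (trace_chan d t x) (\<lambda>ys. return_pmf (y # ys)))"

text \<open>Per-symbol law of the remnant channel: the nonempty set S of outputs (indices
0..t-1) in which the symbol is kept, with probability
delta^(t-|S|) (1-delta)^|S| / (1 - delta^t).\<close>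
definition remnant_set_pmf :: "real \<Rightarrow> nat \<Rightarrow> nat set pmf" where
  "remnant_set_pmf d t = embed_pmf (\<lambda>S.
     if S \<subseteq> {..<t} \<and> S \<noteq> {}
     then d ^ (t - card S) * (1 - d) ^ card S / (1 - d ^ t) else 0)"

fun remnant_chan :: "real \<Rightarrow> nat \<Rightarrow> 'a list \<Rightarrow> 'a list list pmf" where
  "remnant_chan d t [] = return_pmf (replicate t [])"
| "remnant_chan d t (x # xs) =
     bind_pmf (remnant_set_pmf d t) (\<lambda>S.
     bind_pmf (remnant_chan d t xs) (\<lambda>ys.
     return_pmf (map (\<lambda>i. if i \<in> S then x # ys ! i else ys ! i) [0..<t])))"

definition cascade_chan :: "real \<Rightarrow> nat \<Rightarrow> 'a list \<Rightarrow> 'a list list pmf" where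
  "cascade_chan d t x = bind_pmf (del_chan (d ^ t) x) (remnant_chan d t)"

end

theory Submission imports Defs begin

text \<open>Both channels act symbol by symbol: each input symbol is independently appended to a
random set S of the t outputs. For the t-trace channel, S is the set of traces in which the
symbol survives, i.e. each index lies in S independently with probability 1 - delta. Thus S
is empty with probability delta^t, and conditioned on S being nonempty it has exactly the
remnant law. Deleting a symbol with probability delta^t and otherwise drawing S from the
remnant law gives the same law of S, hence the same channel.\<close>

definition prepend_at :: "nat \<Rightarrow> nat set \<Rightarrow> 'a \<Rightarrow> 'a list list \<Rightarrow> 'a list list" where
  "prepend_at t S a ys = map (\<lambda>i. if i \<in> S then a # ys ! i else ys ! i) [0..<t]"

lemma prepend_at_empty: "length ys = t \<Longrightarrow> prepend_at t {} a ys = ys"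
  unfolding prepend_at_def using map_nth[of ys] by simp

lemma prepend_at_Suc:
  "prepend_at (Suc t) (if k then insert 0 (Suc ` S) else Suc ` S) a (y # ys)
     = (if k then a # y else y) # prepend_at t S a ys"
  by (simp add: prepend_at_def map_Suc_upt[symmetric] upt_conv_Cons del: upt_Suc) (auto simp: image_iff)

fun subset_chan :: "nat set pmf \<Rightarrow> nat \<Rightarrow> 'a list \<Rightarrow> 'a list list pmf" where
  "subset_chan P t [] = return_pmf (replicate t [])"
| "subset_chan P t (a # xs) =
     bind_pmf P (\<lambda>S. map_pmf (prepend_at t S a) (subset_chan P t xs))"

lemma length_subset_chan: "ys \<in> set_pmf (subset_chan P t xs) \<Longrightarrow> length ys = t"
  by (induction xs arbitrary: ys) (auto simp: prepend_at_def)

lemma remnant_chan_eq_subset_chan: "remnant_chan d t xs = subset_chan (remnant_set_pmf d t) t xs"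
  by (induction xs) (simp_all add: prepend_at_def map_pmf_def)

definition thin_pmf :: "real \<Rightarrow> 'a set pmf \<Rightarrow> 'a set pmf" where
  "thin_pmf q P = bind_pmf (bernoulli_pmf (1 - q)) (\<lambda>k. if k then P else return_pmf {})"

lemma bind_del_chan_subset_chan:
  "bind_pmf (del_chan q xs) (subset_chan P t) = subset_chan (thin_pmf q P) t xs"
proof (induction xs)
  case Nil
  show ?case by (simp add: bind_return_pmf)
next
  case (Cons a xs)
  let ?Q = "thin_pmf q P"
  have kept: "bind_pmf (del_chan q xs) (\<lambda>zs. bind_pmf P (\<lambda>S. map_pmf (prepend_at t S a) (subset_chan P t zs)))
      = bind_pmf P (\<lambda>S. map_pmf (prepend_at t S a) (subset_chan ?Q t xs))"
    by (subst bind_commute_pmf) (simp add: Cons.IH[symmetric] map_bind_pmf)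
  have deleted: "subset_chan ?Q t xs = map_pmf (prepend_at t {} a) (subset_chan ?Q t xs)"
    by (simp add: map_pmf_idI prepend_at_empty length_subset_chan)
  have "bind_pmf (del_chan q (a # xs)) (subset_chan P t)
     = bind_pmf (bernoulli_pmf (1 - q)) (\<lambda>k. bind_pmf (del_chan q xs) (\<lambda>zs.
         subset_chan P t (if k then a # zs else zs)))"
    by (simp add: bind_assoc_pmf bind_return_pmf)
  also have "\<dots> = bind_pmf (bernoulli_pmf (1 - q)) (\<lambda>k.
      bind_pmf (if k then P else return_pmf {}) (\<lambda>S. map_pmf (prepend_at t S a) (subset_chan ?Q t xs)))"
    by (intro bind_pmf_cong refl) (auto simp: kept Cons.IH bind_return_pmf simp flip: deleted)
  also have "\<dots> = subset_chan ?Q t (a # xs)"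
    by (simp add: thin_pmf_def bind_assoc_pmf)
  finally show ?case .
qed

fun keep_set_pmf :: "real \<Rightarrow> nat \<Rightarrow> nat set pmf" where
  "keep_set_pmf d 0 = return_pmf {}"
| "keep_set_pmf d (Suc t) = bind_pmf (bernoulli_pmf (1 - d)) (\<lambda>k.
     map_pmf (\<lambda>S. if k then insert 0 (Suc ` S) else Suc ` S) (keep_set_pmf d t))"

lemma trace_chan_Nil: "trace_chan d t [] = return_pmf (replicate t [])"
  by (induction t) (simp_all add: bind_return_pmf)

lemma trace_chan_Cons:
  "trace_chan d t (a # xs)
     = bind_pmf (keep_set_pmf d t) (\<lambda>S. map_pmf (prepend_at t S a) (trace_chan d t xs))"
proof (induction t)
  case 0
  show ?case by (simp add: bind_return_pmf prepend_at_def)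
next
  case (Suc t)
  show ?case
    by (simp add: Suc.IH bind_assoc_pmf bind_return_pmf map_pmf_def prepend_at_Suc)
       (intro bind_pmf_cong refl, rule bind_commute_pmf)
qed

lemma trace_chan_eq_subset_chan: "trace_chan d t xs = subset_chan (keep_set_pmf d t) t xs"
  by (induction xs) (simp_all add: trace_chan_Nil trace_chan_Cons)

lemma inj_insert_0_image_Suc: "inj (\<lambda>S. insert (0::nat) (Suc ` S))"
  by (rule injI) (metis Suc_neq_Zero image_insert inj_Suc inj_image_eq_iff insert_ident imageE)

lemma pmf_keep_set_pmf_Suc_insert_0:
  assumes "0 \<le> d" "d \<le> 1"
  shows "pmf (keep_set_pmf d (Suc t)) (insert 0 (Suc ` A)) = (1 - d) * pmf (keep_set_pmf d t) A"
proof -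
  have "pmf (map_pmf (image Suc) (keep_set_pmf d t)) (insert 0 (Suc ` A)) = 0"
    by (rule pmf_map_outside) auto
  then show ?thesis
    using assms by (simp add: pmf_bind pmf_map_inj'[OF inj_insert_0_image_Suc])
qed

lemma pmf_keep_set_pmf_Suc_image_Suc:
  assumes "0 \<le> d" "d \<le> 1"
  shows "pmf (keep_set_pmf d (Suc t)) (Suc ` A) = d * pmf (keep_set_pmf d t) A"
proof -
  have "pmf (map_pmf (\<lambda>S. insert 0 (Suc ` S)) (keep_set_pmf d t)) (Suc ` A) = 0"
    by (rule pmf_map_outside) auto
  then show ?thesis
    using assms inj_on_image[of Suc UNIV] by (simp add: pmf_bind pmf_map_inj')
qed

lemma nat_set_cases:
  obtains A where "S = insert 0 (Suc ` A)" | A where "S = Suc ` (A :: nat set)"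
proof -
  have "S = (if 0 \<in> S then insert 0 (Suc ` {i. Suc i \<in> S}) else Suc ` {i. Suc i \<in> S})"
    by (auto simp: image_iff) (metis not0_implies_Suc)+
  then show ?thesis
    using that by metis
qed

lemma pmf_keep_set_pmf:
  assumes "0 \<le> d" "d \<le> 1"
  shows "pmf (keep_set_pmf d t) S = (if S \<subseteq> {..<t} then (1 - d) ^ card S * d ^ (t - card S) else 0)"
proof (induction t arbitrary: S)
  case 0
  show ?case by (auto simp: pmf_return)
next
  case (Suc t)
  show ?case
  proof (cases S rule: nat_set_cases)
    case (1 A)
    have "A \<subseteq> {..<t} \<Longrightarrow> card S = Suc (card A)"
      using finite_subset[of A "{..<t}"] by (simp add: 1 card_image)
    then show ?thesis
      unfolding pmf_keep_set_pmf_Suc_insert_0[OF assms] 1 Suc.IH by (auto simp: subset_eq)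
  next
    case (2 A)
    have "A \<subseteq> {..<t} \<Longrightarrow> card S = card A \<and> card A \<le> t"
      using card_mono[of "{..<t}" A] finite_subset[of A "{..<t}"] by (simp add: 2 card_image)
    then show ?thesis
      unfolding pmf_keep_set_pmf_Suc_image_Suc[OF assms] 2 Suc.IH by (auto simp: Suc_diff_le subset_eq)
  qed
qed

lemma measure_pmf_nonempty: "measure_pmf.prob p {S. S \<noteq> {}} = 1 - pmf p {}"
proof -
  have "{S. S \<noteq> {}} = space (measure_pmf p) - {{}}"
    by auto
  then show ?thesis
    using measure_pmf.prob_compl[of "{{}}" p] by (simp add: measure_pmf_single)
qed

lemma set_pmf_Int_nonempty:
  assumes "pmf p {} < 1"
  shows "set_pmf p \<inter> {S. S \<noteq> {}} \<noteq> {}"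
proof
  assume "set_pmf p \<inter> {S. S \<noteq> {}} = {}"
  then have "p = return_pmf {}"
    by (auto simp flip: set_pmf_subset_singleton)
  with assms show False
    by simp
qed

lemma remnant_set_pmf_eq_cond_pmf:
  assumes "0 < t" "0 \<le> d" "d < 1"
  shows "remnant_set_pmf d t = cond_pmf (keep_set_pmf d t) {S. S \<noteq> {}}"
proof -
  let ?K = "keep_set_pmf d t"
  have empty: "pmf ?K {} = d ^ t"
    using assms by (simp add: pmf_keep_set_pmf)
  have nonempty: "set_pmf ?K \<inter> {S. S \<noteq> {}} \<noteq> {}"
    using assms by (simp add: set_pmf_Int_nonempty empty power_less_one_iff)
  have "(\<lambda>S. if S \<subseteq> {..<t} \<and> S \<noteq> {} then d ^ (t - card S) * (1 - d) ^ card S / (1 - d ^ t) else 0)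
      = pmf (cond_pmf ?K {S. S \<noteq> {}})"
    using assms by (auto simp: pmf_cond[OF nonempty] measure_pmf_nonempty empty pmf_keep_set_pmf mult.commute)
  then show ?thesis
    unfolding remnant_set_pmf_def by (simp add: type_definition.Rep_inverse[OF td_pmf_embed_pmf])
qed

lemma thin_pmf_cond_pmf_nonempty:
  assumes "pmf p {} < 1"
  shows "thin_pmf (pmf p {}) (cond_pmf p {S. S \<noteq> {}}) = p"
proof (rule pmf_eqI)
  fix S
  have "pmf (thin_pmf (pmf p {}) (cond_pmf p {S. S \<noteq> {}})) S
      = (1 - pmf p {}) * pmf (cond_pmf p {S. S \<noteq> {}}) S + (if S = {} then pmf p {} else 0)"
    by (simp add: thin_pmf_def pmf_bind pmf_le_1 indicator_def)
  also have "\<dots> = pmf p S"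
    using assms by (auto simp: pmf_cond[OF set_pmf_Int_nonempty[OF assms]] measure_pmf_nonempty)
  finally show "pmf (thin_pmf (pmf p {}) (cond_pmf p {S. S \<noteq> {}})) S = pmf p S" .
qed

lemma keep_set_pmf_eq_thin_pmf_remnant_set_pmf:
  assumes "0 < t" "0 \<le> d" "d < 1"
  shows "keep_set_pmf d t = thin_pmf (d ^ t) (remnant_set_pmf d t)"
proof -
  have "pmf (keep_set_pmf d t) {} = d ^ t"
    using assms by (simp add: pmf_keep_set_pmf)
  then show ?thesis
    using assms thin_pmf_cond_pmf_nonempty[of "keep_set_pmf d t"]
    by (simp add: remnant_set_pmf_eq_cond_pmf power_less_one_iff)
qed

theorem theorem3:
  fixes t :: nat and \<delta> :: real and x :: "bool list" and ys :: "bool list list"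
  assumes "t \<ge> 1" and "0 \<le> \<delta>" and "\<delta> < 1" and "length ys = t"
  shows "pmf (trace_chan \<delta> t x) ys = pmf (cascade_chan \<delta> t x) ys"
proof -
  have "trace_chan \<delta> t x = subset_chan (keep_set_pmf \<delta> t) t x"
    by (rule trace_chan_eq_subset_chan)
  also have "\<dots> = subset_chan (thin_pmf (\<delta> ^ t) (remnant_set_pmf \<delta> t)) t x"
    using assms by (simp add: keep_set_pmf_eq_thin_pmf_remnant_set_pmf)
  also have "\<dots> = bind_pmf (del_chan (\<delta> ^ t) x) (subset_chan (remnant_set_pmf \<delta> t) t)"
    by (rule bind_del_chan_subset_chan[symmetric])
  also have "\<dots> = cascade_chan \<delta> t x"
    by (simp add: cascade_chan_def remnant_chan_eq_subset_chan[abs_def])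
  finally show ?thesis
    by simp
qed

end
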